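(* Let $\lambda\in(0,r^\alpha)$ and consider the $\lambda$-NRW on the augmented tree. For $f\in\mathcal D_X$: (i) there exists $C>0$ (depending on $f$) such that for every geodesic ray $(\mathbf x_n)_n$, $|f(\mathbf x_{n+1})-f(\mathbf x_n)|\le C(\lambda/r^\alpha)^{n/2}$ for all $n$, and hence $\lim_{n\to\infty}f(\mathbf x_n)$ exists; (ii) if two geodesic rays $(\mathbf x_n)_n$ and $(\mathbf y_n)_n$ converge to the same point of $K$, then $\lim_nf(\mathbf x_n)=\lim_nf(\mathbf y_n)$.
   Context: Let $\{S_i\}_{i=1}^N$ ($N\ge2$) be contractive similitudes of $\mathbb R^d$ with ratios $r_i\in(0,1)$ satisfying the open set condition; $K$ the self-similar set, $\alpha$ its Hausdorff dimension ($\sum r_i^\alpha=1$), $r=\min r_i$. $\Sigma^*$ finite words with empty word $\vartheta$, $S_{\mathbf x}=S_{i_1}\circ\cdots\circ S_{i_k}$, $r_{\mathbf x}=r_{i_1}\cdots r_{i_k}$. $\mathcal J_0=\{\vartheta\}$, $\mathcal J_n=\{i_1\cdots i_k:r_{i_1\cdots i_k}\le r^n<r_{i_1\cdots i_{k-1}}\}$, $X=\bigcup_n\mathcal J_n$, $|\mathbf x|=n$ on $\mathcal J_n$, parent $\mathbf x^-$ the prefix in $\mathcal J_{n-1}$. Edges: $\{\mathbf x,\mathbf x^-\}$ and horizontal $\{\mathbf x,\mathbf y\}$ ($\mathbf x\ne\mathbf y\in\mathcal J_n$, $\inf_{\xi,\eta\in K}|S_{\mathbf x}(\xi)-S_{\mathbf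 y}(\eta)|\le\gamma r^n$); $\mathbf x\sim\mathbf y$ denotes adjacency. A geodesic ray is $(\mathbf x_n)$, $\mathbf x_n\in\mathcal J_n$, each a prefix of the next; it converges to $\xi$ if $\xi\in S_{\mathbf x_n}(K)$ for all $n$. The $\lambda$-NRW conductances: $c(\mathbf x,\mathbf x^-)=r_{\mathbf x}^\alpha\lambda^{-|\mathbf x|}$, $c(\mathbf x,\mathbf y)\asymp r_{\mathbf x}^\alpha\lambda^{-|\mathbf x|}$ for horizontal edges, zero otherwise. $\mathcal E_X[f]=\frac12\sum_{\mathbf x\sim\mathbf y}c(\mathbf x,\mathbf y)(f(\mathbf x)-f(\mathbf y))^2$, $\mathcal D_X=\{f:X\to\mathbb R:\mathcal E_X[f]<\infty\}$. *)

theory Defs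
  imports "HOL-Analysis.Analysis" "HOL-Library.Sublist"
begin

definition similitude :: "('a::metric_space \<Rightarrow> 'a) \<Rightarrow> real \<Rightarrow> bool" where
  "similitude f c \<longleftrightarrow> (\<forall>x y. dist (f x) (f y) = c * dist x y)"

definition open_set_condition :: "nat \<Rightarrow> (nat \<Rightarrow> 'a::metric_space \<Rightarrow> 'a) \<Rightarrow> bool" where
  "open_set_condition N S \<longleftrightarrow>
     (\<exists>U. open U \<and> bounded U \<and> U \<noteq> {} \<and> (\<forall>i<N. S i ` U \<subseteq> U) \<and>
          (\<forall>i<N. \<forall>j<N. i \<noteq> j \<longrightarrow> S i ` U \<inter> S j ` U = {}))"

definition words :: "nat \<Rightarrow> nat list set" where
  "words N = {w. set w \<subseteq> {..<N}}"

definition r_word :: "(nat \<Rightarrow> real) \<Rightarrow> nat list \<Rightarrow> real" where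
  "r_word r w = prod_list (map r w)"

definition S_word :: "(nat \<Rightarrow> 'a \<Rightarrow> 'a) \<Rightarrow> nat list \<Rightarrow> 'a \<Rightarrow> 'a" where
  "S_word S w = foldr (\<lambda>i g. S i \<circ> g) w id"

definition rmin :: "nat \<Rightarrow> (nat \<Rightarrow> real) \<Rightarrow> real" where
  "rmin N r = Min (r ` {..<N})"

definition J :: "nat \<Rightarrow> (nat \<Rightarrow> real) \<Rightarrow> nat \<Rightarrow> nat list set" where
  "J N r n = (if n = 0 then {[]} else
     {w \<in> words N. w \<noteq> [] \<and> r_word r w \<le> rmin N r ^ n \<and> rmin N r ^ n < r_word r (butlast w)})"

definition XX :: "nat \<Rightarrow> (nat \<Rightarrow> real) \<Rightarrow> nat list set" where
  "XX N r = (\<Union>n. J N r n)"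

definition vert_edge :: "nat \<Rightarrow> (nat \<Rightarrow> real) \<Rightarrow> nat list \<Rightarrow> nat list \<Rightarrow> nat \<Rightarrow> bool" where
  "vert_edge N r x y n \<longleftrightarrow> 1 \<le> n \<and> x \<in> J N r n \<and> y \<in> J N r (n - 1) \<and> prefix y x"

definition horiz_edge :: "nat \<Rightarrow> (nat \<Rightarrow> real) \<Rightarrow> (nat \<Rightarrow> 'a::metric_space \<Rightarrow> 'a) \<Rightarrow> 'a set \<Rightarrow> real
     \<Rightarrow> nat list \<Rightarrow> nat list \<Rightarrow> nat \<Rightarrow> bool" where
  "horiz_edge N r S K \<gamma> x y n \<longleftrightarrow> x \<noteq> y \<and> x \<in> J N r n \<and> y \<in> J N r n \<and>
     (INF p\<in>K \<times> K. dist (S_word S x (fst p)) (S_word S y (snd p))) \<le> \<gamma> * rmin N r ^ n"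

definition adj :: "nat \<Rightarrow> (nat \<Rightarrow> real) \<Rightarrow> (nat \<Rightarrow> 'a::metric_space \<Rightarrow> 'a) \<Rightarrow> 'a set \<Rightarrow> real
     \<Rightarrow> nat list \<Rightarrow> nat list \<Rightarrow> bool" where
  "adj N r S K \<gamma> x y \<longleftrightarrow>
     (\<exists>n. vert_edge N r x y n \<or> vert_edge N r y x n \<or> horiz_edge N r S K \<gamma> x y n)"

definition nrw_conductance :: "nat \<Rightarrow> (nat \<Rightarrow> real) \<Rightarrow> (nat \<Rightarrow> 'a::metric_space \<Rightarrow> 'a) \<Rightarrow> 'a set \<Rightarrow> real
     \<Rightarrow> real \<Rightarrow> real \<Rightarrow> (nat list \<Rightarrow> nat list \<Rightarrow> real) \<Rightarrow> bool" where
  "nrw_conductance N r S K \<gamma> \<alpha> lam c \<longleftrightarrow>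
     (\<forall>x y. c x y = c y x) \<and>
     (\<forall>x y. \<not> adj N r S K \<gamma> x y \<longrightarrow> c x y = 0) \<and>
     (\<forall>x y n. vert_edge N r x y n \<longrightarrow> c x y = r_word r x powr \<alpha> / lam ^ n) \<and>
     (\<exists>C1 C2. 0 < C1 \<and> C1 \<le> C2 \<and>
        (\<forall>x y n. horiz_edge N r S K \<gamma> x y n \<longrightarrow>
           C1 * (r_word r x powr \<alpha> / lam ^ n) \<le> c x y \<and>
           c x y \<le> C2 * (r_word r x powr \<alpha> / lam ^ n)))"

text \<open>Energy E_X[f] = 1/2 sum over ordered adjacent pairs; D_X = functions of finite energy
  (the terms are nonnegative, so finiteness is summability).\<close>
definition energy :: "(nat list \<Rightarrow> nat list \<Rightarrow> bool) \<Rightarrow> (nat list \<Rightarrow> nat list \<Rightarrow> real)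
     \<Rightarrow> (nat list \<Rightarrow> real) \<Rightarrow> real" where
  "energy A c f = (1/2) * (\<Sum>\<^sub>\<infinity>(x,y)\<in>{(x,y). A x y}. c x y * (f x - f y)^2)"

definition dirichlet_dom :: "(nat list \<Rightarrow> nat list \<Rightarrow> bool) \<Rightarrow> (nat list \<Rightarrow> nat list \<Rightarrow> real)
     \<Rightarrow> (nat list \<Rightarrow> real) set" where
  "dirichlet_dom A c = {f. (\<lambda>(x,y). c x y * (f x - f y)^2) summable_on {(x,y). A x y}}"

definition geodesic_ray :: "nat \<Rightarrow> (nat \<Rightarrow> real) \<Rightarrow> (nat \<Rightarrow> nat list) \<Rightarrow> bool" where
  "geodesic_ray N r xs \<longleftrightarrow> (\<forall>n. xs n \<in> J N r n \<and> prefix (xs n) (xs (Suc n)))"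

definition ray_converges_to :: "(nat \<Rightarrow> 'a \<Rightarrow> 'a) \<Rightarrow> 'a set \<Rightarrow> (nat \<Rightarrow> nat list) \<Rightarrow> 'a \<Rightarrow> bool" where
  "ray_converges_to S K xs \<xi> \<longleftrightarrow> (\<forall>n. \<xi> \<in> S_word S (xs n) ` K)"

end

theory Submission
  imports Defs
begin

text \<open>Every edge term \<open>c(x,y) (f x - f y)\<^sup>2\<close> of a function of finite energy is bounded by
  twice its energy. Every word of level \<open>n\<close> has ratio at least \<open>r^(n+1)\<close>, so the conductance
  of a vertical edge between levels \<open>n+1\<close> and \<open>n\<close>, and of a horizontal edge at level \<open>n\<close>, is
  at least a constant times \<open>\<theta>^-n\<close>, where \<open>\<theta> = \<lambda>/r^\<alpha> < 1\<close>; hence \<open>f\<close> changes by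
  \<open>O(\<theta>^(n/2))\<close> along such an edge. Along a geodesic ray these increments are summable. Two
  rays converging to the same point \<open>\<xi>\<close> have level-\<open>n\<close> cells that both contain \<open>\<xi>\<close>, so
  these cells coincide or are joined by a horizontal edge, and the values of \<open>f\<close> on the two
  rays approach each other.\<close>

lemma abs_le_sqrt_of_weighted_square_le:
  fixes b c d E :: real
  assumes "0 < b" "b \<le> c" "c * d\<^sup>2 \<le> E"
  shows "\<bar>d\<bar> \<le> sqrt (E / b)"
proof -
  have "0 \<le> E" using assms by (smt (verit) mult_nonneg_nonneg zero_le_power2)
  have "d\<^sup>2 \<le> E / c" using assms by (simp add: field_simps mult.commute)
  also have "\<dots> \<le> E / b" using assms \<open>0 \<le> E\<close> by (intro divide_left_mono) auto
  finally show ?thesis using real_sqrt_le_mono by fastforce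
qed

lemma convergent_of_summable_increments:
  fixes u :: "nat \<Rightarrow> 'a::banach"
  assumes "summable b" "\<And>n. norm (u (Suc n) - u n) \<le> b n"
  shows "convergent u"
proof -
  have "summable (\<lambda>n. u (Suc n) - u n)"
    using assms by (intro summable_comparison_test[OF _ assms(1)]) auto
  then have "(\<lambda>n. u n - u 0) \<longlonglongrightarrow> (\<Sum>n. u (Suc n) - u n)"
    using summable_LIMSEQ sum_lessThan_telescope[of u] by fastforce
  then have "(\<lambda>n. (u n - u 0) + u 0) \<longlonglongrightarrow> (\<Sum>n. u (Suc n) - u n) + u 0"
    by (intro tendsto_add) auto
  then show ?thesis by (auto simp: convergent_def)
qed

lemma lim_eq_of_diff_tendsto_zero:
  fixes u v :: "nat \<Rightarrow> 'a::real_normed_vector"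
  assumes "convergent u" "convergent v" "(\<lambda>n. u n - v n) \<longlonglongrightarrow> 0"
  shows "lim u = lim v"
proof -
  have "(\<lambda>n. u n - v n) \<longlonglongrightarrow> lim u - lim v"
    using assms(1,2) by (intro tendsto_diff) (auto simp: convergent_LIMSEQ_iff)
  with assms(3) show ?thesis using LIMSEQ_unique by fastforce
qed

lemma dirichlet_edge_term_le_energy:
  assumes nonneg: "\<And>x y. A x y \<Longrightarrow> 0 \<le> c x y"
    and f: "f \<in> dirichlet_dom A c" and "A x y"
  shows "c x y * (f x - f y)\<^sup>2 \<le> 2 * energy A c f"
proof -
  let ?g = "\<lambda>(x, y). c x y * (f x - f y)\<^sup>2"
  have "sum ?g {(x, y)} \<le> infsum ?g {(x, y). A x y}"
    using f \<open>A x y\<close> nonneg by (intro finite_sum_le_infsum) (auto simp: dirichlet_dom_def)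
  then show ?thesis by (simp add: energy_def)
qed

lemma dirichlet_edge_increment_le:
  assumes "\<And>x y. A x y \<Longrightarrow> 0 \<le> c x y"
    and "f \<in> dirichlet_dom A c" "A x y" "0 < b" "b \<le> c x y"
  shows "\<bar>f x - f y\<bar> \<le> sqrt (2 * energy A c f / b)"
  using abs_le_sqrt_of_weighted_square_le[OF assms(4,5) dirichlet_edge_term_le_energy[OF assms(1-3)]] .

lemma energy_nonneg:
  assumes "\<And>x y. A x y \<Longrightarrow> 0 \<le> c x y"
  shows "0 \<le> energy A c f"
  unfolding energy_def using assms by (auto intro!: infsum_nonneg)

lemma rmin_le:
  assumes "i < N"
  shows "rmin N r \<le> r i"
  unfolding rmin_def using assms by auto

lemma rmin_in_ratios:
  assumes "0 < N"
  shows "rmin N r \<in> r ` {..<N}"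
  unfolding rmin_def using assms by (intro Min_in) auto

lemma r_word_ge_rmin_power:
  assumes x: "x \<in> J N r n" and ratios: "\<forall>i<N. 0 < r i \<and> r i < 1" and "0 < N"
  shows "rmin N r ^ Suc n \<le> r_word r x"
proof (cases "n = 0")
  case True
  then have "x = []" using x by (simp add: J_def)
  moreover have "rmin N r < 1" using rmin_in_ratios[OF \<open>0 < N\<close>, of r] ratios by auto
  ultimately show ?thesis using True by (simp add: r_word_def)
next
  case False
  then have x': "set x \<subseteq> {..<N}" "x \<noteq> []" "rmin N r ^ n < r_word r (butlast x)"
    using x by (auto simp: J_def words_def)
  have "r_word r x = r_word r (butlast x) * r (last x)"
    by (subst append_butlast_last_id[OF \<open>x \<noteq> []\<close>, symmetric]) (simp add: r_word_def)
  moreover have "rmin N r \<le> r (last x)"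
    using x'(1,2) last_in_set[of x] by (intro rmin_le) blast
  moreover have "0 < rmin N r" using rmin_in_ratios[OF \<open>0 < N\<close>, of r] ratios by auto
  ultimately show ?thesis using x'(3) by (simp add: mult.commute mult_mono less_imp_le)
qed

lemma similarity_dimension_pos:
  fixes N :: nat and \<alpha> :: real
  assumes "N \<ge> 2" "\<forall>i<N. 0 < r i \<and> r i < 1" "(\<Sum>i<N. r i powr \<alpha>) = 1"
  shows "0 < \<alpha>"
proof (rule ccontr)
  assume "\<not> 0 < \<alpha>"
  then have "1 \<le> r i powr \<alpha>" if "i < N" for i
    using assms(2) that powr_mono'[of \<alpha> 0 "r i"] by force
  then have "(\<Sum>i<N. (1::real)) \<le> (\<Sum>i<N. r i powr \<alpha>)" by (intro sum_mono) auto
  then show False using assms by simp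
qed

lemma powr_half_eq_sqrt_power:
  fixes q :: real
  assumes "0 < q"
  shows "q powr (real n / 2) = sqrt q ^ n"
  using assms by (simp add: powr_half_sqrt[symmetric] powr_powr powr_realpow[symmetric] powr_mult_base)

lemma sqrt_div_div_power:
  fixes q :: real
  assumes "0 < q"
  shows "sqrt (E / (b / q ^ n)) = sqrt (E / b) * q powr (real n / 2)"
  using assms by (simp add: powr_half_eq_sqrt_power real_sqrt_mult real_sqrt_power[symmetric] real_sqrt_divide)

lemma power_powr_eq:
  fixes x :: real
  assumes "0 < x"
  shows "(x ^ n) powr a = (x powr a) ^ n"
  using assms by (simp add: powr_power powr_realpow[symmetric] powr_powr mult.commute)

locale lambda_nrw =
  fixes N :: nat and r :: "nat \<Rightarrow> real" and S :: "nat \<Rightarrow> 'a::metric_space \<Rightarrow> 'a"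
    and K :: "'a set" and \<alpha> \<gamma> lam :: real and c :: "nat list \<Rightarrow> nat list \<Rightarrow> real"
  assumes N: "N \<ge> 2"
    and ratios: "\<forall>i<N. 0 < r i \<and> r i < 1"
    and alpha: "(\<Sum>i<N. r i powr \<alpha>) = 1"
    and gamma: "\<gamma> > 0"
    and lam: "0 < lam" "lam < rmin N r powr \<alpha>"
    and cond: "nrw_conductance N r S K \<gamma> \<alpha> lam c"
begin

abbreviation \<theta> :: real where "\<theta> \<equiv> lam / rmin N r powr \<alpha>"

lemma rmin_pos: "0 < rmin N r"
  using rmin_in_ratios[of N r] N ratios by auto

lemma theta_pos: "0 < \<theta>" and theta_less_one: "\<theta> < 1"
  using lam rmin_pos by auto

lemma r_word_powr_ge:
  assumes "x \<in> J N r n"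
  shows "(rmin N r powr \<alpha>) ^ Suc n \<le> r_word r x powr \<alpha>"
proof -
  have "(rmin N r ^ Suc n) powr \<alpha> \<le> r_word r x powr \<alpha>"
    using r_word_ge_rmin_power[OF assms ratios] N rmin_pos similarity_dimension_pos[OF N ratios alpha]
    by (intro powr_mono2) auto
  then show ?thesis by (simp only: power_powr_eq[OF rmin_pos])
qed

lemma conductance_sym: "c x y = c y x"
  using cond by (simp add: nrw_conductance_def)

lemma vert_conductance: "vert_edge N r x y n \<Longrightarrow> c x y = r_word r x powr \<alpha> / lam ^ n"
  using cond by (simp add: nrw_conductance_def)

lemma vert_conductance_ge:
  assumes "vert_edge N r x y (Suc n)"
  shows "(rmin N r powr \<alpha>)\<^sup>2 / lam / \<theta> ^ n \<le> c x y"
proof -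
  have "(rmin N r powr \<alpha>)\<^sup>2 / lam / \<theta> ^ n = (rmin N r powr \<alpha>) ^ Suc (Suc n) / lam ^ Suc n"
    using lam rmin_pos by (simp add: field_simps power2_eq_square)
  also have "\<dots> \<le> r_word r x powr \<alpha> / lam ^ Suc n"
    using assms r_word_powr_ge[of x "Suc n"] lam by (intro divide_right_mono) (auto simp: vert_edge_def)
  also have "\<dots> = c x y" using vert_conductance[OF assms] by simp
  finally show ?thesis .
qed

lemma horiz_conductance_ge:
  obtains C where "0 < C" "\<And>x y n. horiz_edge N r S K \<gamma> x y n \<Longrightarrow> C / \<theta> ^ n \<le> c x y"
proof -
  obtain C1 where "0 < C1"
    and hor: "\<And>x y n. horiz_edge N r S K \<gamma> x y n \<Longrightarrow> C1 * (r_word r x powr \<alpha> / lam ^ n) \<le> c x y"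
    using cond unfolding nrw_conductance_def by blast
  have "C1 * rmin N r powr \<alpha> / \<theta> ^ n \<le> c x y" if "horiz_edge N r S K \<gamma> x y n" for x y n
  proof -
    have "C1 * rmin N r powr \<alpha> / \<theta> ^ n = C1 * ((rmin N r powr \<alpha>) ^ Suc n / lam ^ n)"
      using lam rmin_pos by (simp add: field_simps)
    also have "\<dots> \<le> C1 * (r_word r x powr \<alpha> / lam ^ n)"
      using that r_word_powr_ge lam \<open>0 < C1\<close>
      by (intro mult_left_mono divide_right_mono) (auto simp: horiz_edge_def)
    also have "\<dots> \<le> c x y" using hor[OF that] .
    finally show ?thesis .
  qed
  moreover have "0 < C1 * rmin N r powr \<alpha>" using \<open>0 < C1\<close> rmin_pos by simp
  ultimately show thesis using that by blast
qed

lemma conductance_nonneg: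
  assumes "adj N r S K \<gamma> x y"
  shows "0 \<le> c x y"
proof -
  obtain C where "0 < C" and hor: "\<And>x y n. horiz_edge N r S K \<gamma> x y n \<Longrightarrow> C / \<theta> ^ n \<le> c x y"
    using horiz_conductance_ge by blast
  obtain n where "vert_edge N r x y n \<or> vert_edge N r y x n \<or> horiz_edge N r S K \<gamma> x y n"
    using assms unfolding adj_def by blast
  then show ?thesis
  proof (elim disjE)
    assume "horiz_edge N r S K \<gamma> x y n"
    with hor[OF this] \<open>0 < C\<close> theta_pos show ?thesis by (smt (verit) divide_pos_pos zero_less_power)
  next
    assume "vert_edge N r x y n"
    then show ?thesis using lam by (simp add: vert_conductance)
  next
    assume "vert_edge N r y x n"
    then show ?thesis using lam by (simp add: conductance_sym[of x y] vert_conductance)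
  qed
qed

lemma adjacent_increment_le:
  assumes "f \<in> dirichlet_dom (adj N r S K \<gamma>) c" "adj N r S K \<gamma> x y" "0 < b" "b / \<theta> ^ n \<le> c x y"
  shows "\<bar>f x - f y\<bar> \<le> sqrt (2 * energy (adj N r S K \<gamma>) c f / b) * \<theta> powr (real n / 2)"
proof -
  have "\<bar>f x - f y\<bar> \<le> sqrt (2 * energy (adj N r S K \<gamma>) c f / (b / \<theta> ^ n))"
    using assms theta_pos conductance_nonneg by (intro dirichlet_edge_increment_le) auto
  also have "\<dots> = sqrt (2 * energy (adj N r S K \<gamma>) c f / b) * \<theta> powr (real n / 2)"
    by (rule sqrt_div_div_power[OF theta_pos])
  finally show ?thesis .
qed

lemma ray_increment_bound:
  assumes f: "f \<in> dirichlet_dom (adj N r S K \<gamma>) c"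
  shows "\<exists>C>0. \<forall>xs. geodesic_ray N r xs \<longrightarrow>
           (\<forall>n. \<bar>f (xs (Suc n)) - f (xs n)\<bar> \<le> C * \<theta> powr (real n / 2))"
proof (intro exI conjI allI impI)
  define B where "B = (rmin N r powr \<alpha>)\<^sup>2 / lam"
  have "0 < B" using lam rmin_pos by (simp add: B_def)
  let ?C = "sqrt (2 * energy (adj N r S K \<gamma>) c f / B) + 1"
  show "0 < ?C" using energy_nonneg conductance_nonneg \<open>0 < B\<close> by (simp add: add_nonneg_pos)
  fix xs n assume "geodesic_ray N r xs"
  then have v: "vert_edge N r (xs (Suc n)) (xs n) (Suc n)"
    by (simp add: geodesic_ray_def vert_edge_def)
  then have "adj N r S K \<gamma> (xs (Suc n)) (xs n)" by (auto simp: adj_def)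
  then have "\<bar>f (xs (Suc n)) - f (xs n)\<bar>
      \<le> sqrt (2 * energy (adj N r S K \<gamma>) c f / B) * \<theta> powr (real n / 2)"
    using adjacent_increment_le[OF f] \<open>0 < B\<close> vert_conductance_ge[OF v] unfolding B_def by blast
  also have "\<dots> \<le> ?C * \<theta> powr (real n / 2)" by (intro mult_right_mono) auto
  finally show "\<bar>f (xs (Suc n)) - f (xs n)\<bar> \<le> ?C * \<theta> powr (real n / 2)" .
qed

lemma ray_values_convergent:
  assumes "f \<in> dirichlet_dom (adj N r S K \<gamma>) c" "geodesic_ray N r xs"
  shows "convergent (\<lambda>n. f (xs n))"
proof -
  obtain C where "\<forall>n. \<bar>f (xs (Suc n)) - f (xs n)\<bar> \<le> C * sqrt \<theta> ^ n"
    using ray_increment_bound[OF assms(1)] assms(2) powr_half_eq_sqrt_power[OF theta_pos] by auto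
  moreover have "summable (\<lambda>n. C * sqrt \<theta> ^ n)"
    using theta_pos theta_less_one by (intro summable_mult summable_geometric) auto
  ultimately show ?thesis by (intro convergent_of_summable_increments[where b = "\<lambda>n. C * sqrt \<theta> ^ n"]) auto
qed

lemma rays_to_same_point_adjacent:
  assumes xs: "geodesic_ray N r xs" "ray_converges_to S K xs \<xi>"
    and ys: "geodesic_ray N r ys" "ray_converges_to S K ys \<xi>"
    and "xs n \<noteq> ys n"
  shows "horiz_edge N r S K \<gamma> (xs n) (ys n) n"
proof -
  obtain a where "a \<in> K" "\<xi> = S_word S (xs n) a" using xs(2) by (auto simp: ray_converges_to_def)
  obtain b where "b \<in> K" "\<xi> = S_word S (ys n) b" using ys(2) by (auto simp: ray_converges_to_def)
  have "(INF p\<in>K \<times> K. dist (S_word S (xs n) (fst p)) (S_word S (ys n) (snd p)))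
      \<le> dist (S_word S (xs n) a) (S_word S (ys n) b)"
    using \<open>a \<in> K\<close> \<open>b \<in> K\<close> by (intro cINF_lower2[where x = "(a, b)"]) (auto intro: bdd_belowI[where m = 0])
  also have "\<dots> = 0" using \<open>\<xi> = S_word S (xs n) a\<close> \<open>\<xi> = S_word S (ys n) b\<close> by simp
  also have "0 \<le> \<gamma> * rmin N r ^ n" using gamma rmin_pos by simp
  finally show ?thesis using assms xs(1) ys(1) by (auto simp: horiz_edge_def geodesic_ray_def)
qed

lemma rays_to_same_point_same_limit:
  assumes f: "f \<in> dirichlet_dom (adj N r S K \<gamma>) c"
    and xs: "geodesic_ray N r xs" "ray_converges_to S K xs \<xi>"
    and ys: "geodesic_ray N r ys" "ray_converges_to S K ys \<xi>"
  shows "lim (\<lambda>n. f (xs n)) = lim (\<lambda>n. f (ys n))"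
proof -
  obtain C where "0 < C" and hor: "\<And>x y n. horiz_edge N r S K \<gamma> x y n \<Longrightarrow> C / \<theta> ^ n \<le> c x y"
    using horiz_conductance_ge by blast
  let ?D = "sqrt (2 * energy (adj N r S K \<gamma>) c f / C)"
  have "0 \<le> ?D" using energy_nonneg[OF conductance_nonneg] \<open>0 < C\<close> by simp
  have bound: "norm (f (xs n) - f (ys n)) \<le> ?D * \<theta> powr (real n / 2)" for n
  proof (cases "xs n = ys n")
    case False
    then have h: "horiz_edge N r S K \<gamma> (xs n) (ys n) n"
      using rays_to_same_point_adjacent[OF xs ys] by blast
    then have "adj N r S K \<gamma> (xs n) (ys n)" unfolding adj_def by blast
    from adjacent_increment_le[OF f this \<open>0 < C\<close> hor[OF h]] show ?thesis by simp
  qed (use \<open>0 \<le> ?D\<close> in simp)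
  have "(\<lambda>n. ?D * \<theta> powr (real n / 2)) \<longlonglongrightarrow> 0"
    unfolding powr_half_eq_sqrt_power[OF theta_pos] using theta_pos theta_less_one
    by (intro tendsto_mult_right_zero LIMSEQ_power_zero) auto
  then have "(\<lambda>n. f (xs n) - f (ys n)) \<longlonglongrightarrow> 0"
    by (rule Lim_null_comparison[OF always_eventually[OF allI[OF bound]]])
  then show ?thesis
    by (rule lim_eq_of_diff_tendsto_zero[OF ray_values_convergent[OF f xs(1)]
          ray_values_convergent[OF f ys(1)]])
qed

end

theorem lemma3p3:
  fixes N :: nat and S :: "nat \<Rightarrow> 'a::euclidean_space \<Rightarrow> 'a" and r :: "nat \<Rightarrow> real"
    and K :: "'a set" and \<alpha> \<gamma> lam :: real
    and c :: "nat list \<Rightarrow> nat list \<Rightarrow> real" and f :: "nat list \<Rightarrow> real"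
  assumes N: "N \<ge> 2"
    and ratios: "\<forall>i<N. 0 < r i \<and> r i < 1"
    and sim: "\<forall>i<N. similitude (S i) (r i)"
    and osc: "open_set_condition N S"
    and K: "compact K" "K \<noteq> {}" "K = (\<Union>i<N. S i ` K)"
    and alpha: "(\<Sum>i<N. r i powr \<alpha>) = 1"
    and gamma: "\<gamma> > 0"
    and lam: "0 < lam" "lam < rmin N r powr \<alpha>"
    and cond: "nrw_conductance N r S K \<gamma> \<alpha> lam c"
    and f: "f \<in> dirichlet_dom (adj N r S K \<gamma>) c"
  shows "(\<exists>C>0. \<forall>xs. geodesic_ray N r xs \<longrightarrow>
            (\<forall>n. \<bar>f (xs (Suc n)) - f (xs n)\<bar> \<le> C * (lam / rmin N r powr \<alpha>) powr (real n / 2)))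
       \<and> (\<forall>xs. geodesic_ray N r xs \<longrightarrow> convergent (\<lambda>n. f (xs n)))
       \<and> (\<forall>xs ys \<xi>. geodesic_ray N r xs \<and> geodesic_ray N r ys \<and> \<xi> \<in> K \<and>
            ray_converges_to S K xs \<xi> \<and> ray_converges_to S K ys \<xi> \<longrightarrow>
            lim (\<lambda>n. f (xs n)) = lim (\<lambda>n. f (ys n)))"
proof -
  interpret lambda_nrw N r S K \<alpha> \<gamma> lam c
    using N ratios alpha gamma lam cond by unfold_locales
  show ?thesis
    using ray_increment_bound[OF f] ray_values_convergent[OF f]
      rays_to_same_point_same_limit[OF f] by blast
qed

end
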